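(* The Lie algebra $T^*\mathfrak{su}(2)$ (of dimension 6) admits no $k$-symplectic structure for any $k\ge1$.
   Context: $\mathfrak{su}(2)$ is the Lie algebra of $2\times2$ skew-Hermitian traceless complex matrices. For a Lie algebra $\mathfrak{g}$, $T^*\mathfrak{g}=\mathfrak{g}\oplus\mathfrak{g}^*$ with bracket $[u+\alpha,v+\beta]=[u,v]+\mathrm{ad}_u^*\beta-\mathrm{ad}_v^*\alpha$, where $(\mathrm{ad}_u^*\alpha)(v)=-\alpha([u,v])$. A $k$-symplectic structure on a real Lie algebra $\mathfrak{g}$ of dimension $n(k+1)$ ($n,k\ge1$) is a pair consisting of a Lie subalgebra $\mathfrak{h}\subset\mathfrak{g}$ of dimension $nk$ and a family $(\theta_1,\dots,\theta_k)$ of skew-symmetric bilinear forms on $\mathfrak{g}$ such that: (i) $\bigcap_{i=1}^k\ker\theta_i=\{0\}$, where $\ker\theta_i=\{u\in\mathfrak{g}:\theta_i(u,v)=0\ \forall v\in\mathfrak{g}\}$; (ii) each $\theta_i$ is a 2-cocycle: $\theta_i([u,v],w)+\theta_i([v,w],u)+\theta_i([w,u],v)=0$ for all $u,v,w$; (iii) $\theta_i(u,v)=0$ for all $u,v\in\mathfrak{h}$ and all $i$. *)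

theory Defs
  imports "HOL-Analysis.Analysis" "HOL-Library.Function_Algebras" "HOL-Library.Product_Plus"
begin

definition real_subspace_of :: "(real \<Rightarrow> 'a \<Rightarrow> 'a) \<Rightarrow> 'a::ab_group_add set \<Rightarrow> bool" where
  "real_subspace_of sc S \<longleftrightarrow> 0 \<in> S \<and> (\<forall>u\<in>S. \<forall>v\<in>S. u + v \<in> S) \<and> (\<forall>r. \<forall>u\<in>S. sc r u \<in> S)"

definition lie_subalgebra :: "(real \<Rightarrow> 'a \<Rightarrow> 'a) \<Rightarrow> ('a \<Rightarrow> 'a \<Rightarrow> 'a) \<Rightarrow> 'a::ab_group_add set \<Rightarrow> 'a set \<Rightarrow> bool" where
  "lie_subalgebra sc br L H \<longleftrightarrow> H \<subseteq> L \<and> real_subspace_of sc H \<and> (\<forall>u\<in>H. \<forall>v\<in>H. br u v \<in> H)"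

definition skew_bilinear_form :: "(real \<Rightarrow> 'a \<Rightarrow> 'a) \<Rightarrow> 'a::ab_group_add set \<Rightarrow> ('a \<Rightarrow> 'a \<Rightarrow> real) \<Rightarrow> bool" where
  "skew_bilinear_form sc L \<theta> \<longleftrightarrow>
     (\<forall>u\<in>L. \<forall>u'\<in>L. \<forall>v\<in>L. \<theta> (u + u') v = \<theta> u v + \<theta> u' v) \<and>
     (\<forall>r. \<forall>u\<in>L. \<forall>v\<in>L. \<theta> (sc r u) v = r * \<theta> u v) \<and>
     (\<forall>u\<in>L. \<forall>v\<in>L. \<theta> u v = - \<theta> v u)"

definition two_cocycle :: "('a \<Rightarrow> 'a \<Rightarrow> 'a) \<Rightarrow> 'a set \<Rightarrow> ('a \<Rightarrow> 'a \<Rightarrow> real) \<Rightarrow> bool" where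
  "two_cocycle br L \<theta> \<longleftrightarrow>
     (\<forall>u\<in>L. \<forall>v\<in>L. \<forall>w\<in>L. \<theta> (br u v) w + \<theta> (br v w) u + \<theta> (br w u) v = 0)"

definition form_kernel :: "'a set \<Rightarrow> ('a \<Rightarrow> 'a \<Rightarrow> real) \<Rightarrow> 'a set" where
  "form_kernel L \<theta> = {u \<in> L. \<forall>v\<in>L. \<theta> u v = 0}"

definition k_symplectic_structure ::
  "(real \<Rightarrow> 'a \<Rightarrow> 'a) \<Rightarrow> ('a \<Rightarrow> 'a \<Rightarrow> 'a) \<Rightarrow> 'a::ab_group_add set \<Rightarrow> nat \<Rightarrow> 'a set \<Rightarrow> (nat \<Rightarrow> 'a \<Rightarrow> 'a \<Rightarrow> real) \<Rightarrow> bool" where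
  "k_symplectic_structure sc br L k H \<theta> \<longleftrightarrow>
     k \<ge> 1 \<and>
     (\<exists>n::nat. n \<ge> 1 \<and> vector_space.dim sc L = n * (k + 1) \<and> vector_space.dim sc H = n * k) \<and>
     lie_subalgebra sc br L H \<and>
     (\<forall>i\<in>{1..k}. skew_bilinear_form sc L (\<theta> i)) \<and>
     (\<Inter>i\<in>{1..k}. form_kernel L (\<theta> i)) = {0} \<and>
     (\<forall>i\<in>{1..k}. two_cocycle br L (\<theta> i)) \<and>
     (\<forall>i\<in>{1..k}. \<forall>u\<in>H. \<forall>v\<in>H. \<theta> i u v = 0)"

definition su2 :: "(complex^2^2) set" where
  "su2 = {A. (\<forall>i j. A $ i $ j = - cnj (A $ j $ i)) \<and> A $ 1 $ 1 + A $ 2 $ 2 = 0}"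

definition su2_bracket :: "complex^2^2 \<Rightarrow> complex^2^2 \<Rightarrow> complex^2^2" where
  "su2_bracket A B = A ** B - B ** A"

text \<open>The dual su(2)^*: real-linear functionals on su(2), normalised to vanish outside su(2).\<close>
definition su2_dual :: "(complex^2^2 \<Rightarrow> real) set" where
  "su2_dual = {\<alpha>. (\<forall>a\<in>su2. \<forall>b\<in>su2. \<alpha> (a + b) = \<alpha> a + \<alpha> b) \<and>
                  (\<forall>r. \<forall>a\<in>su2. \<alpha> (r *\<^sub>R a) = r * \<alpha> a) \<and>
                  (\<forall>x. x \<notin> su2 \<longrightarrow> \<alpha> x = 0)}"

definition su2_coad :: "complex^2^2 \<Rightarrow> (complex^2^2 \<Rightarrow> real) \<Rightarrow> (complex^2^2 \<Rightarrow> real)" where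
  "su2_coad u \<alpha> = (\<lambda>v. if v \<in> su2 then - \<alpha> (su2_bracket u v) else 0)"

type_synonym tsu2 = "(complex^2^2) \<times> (complex^2^2 \<Rightarrow> real)"

definition Tsu2 :: "tsu2 set" where
  "Tsu2 = su2 \<times> su2_dual"

definition Tsu2_scale :: "real \<Rightarrow> tsu2 \<Rightarrow> tsu2" where
  "Tsu2_scale r x = (r *\<^sub>R fst x, \<lambda>w. r * snd x w)"

definition Tsu2_bracket :: "tsu2 \<Rightarrow> tsu2 \<Rightarrow> tsu2" where
  "Tsu2_bracket x y =
     (su2_bracket (fst x) (fst y), \<lambda>w. su2_coad (fst x) (snd y) w - su2_coad (fst y) (snd x) w)"

end

theory Submission
  imports Defs "HOL-Analysis.Cross3"
begin

text \<open>Identifying su(2) with (\<real>^3, \<times>) and its dual with \<real>^3 via the dot product, T*su(2) becomes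
  \<real>^3 \<times> \<real>^3 with bracket [(x,y),(x',y')] = (x \<times> x', x \<times> y' - x' \<times> y). Every 2-cocycle \<omega> then pairs
  (x,y) with (0,f) as b \<bullet> (x \<times> f) for a vector b: the cocycle identity kills \<omega> on the abelian ideal
  0 \<times> \<real>^3 and forces the mixed part to be a skew form on \<real>^3. Hence (0,w) lies in the kernel of every
  \<omega>_i as soon as w is parallel to all b_i. For k = 1 such w \<noteq> 0 always exists. For k \<ge> 2 the
  dimension count n(k+1) = 6 gives dim H \<ge> 4, and a subalgebra that large contains 0 \<times> \<real>^3 together
  with some (p,q) with p \<noteq> 0; isotropy of H then makes p parallel to all b_i, so (0,p) is in the common
  kernel.\<close>

section \<open>Pulling back k-symplectic structures along linear isomorphisms\<close>

lemma k_symplectic_structureE: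
  assumes "k_symplectic_structure sc br L k H \<theta>"
  obtains n where "1 \<le> k" "1 \<le> n" "vector_space.dim sc L = n * (k + 1)" "vector_space.dim sc H = n * k"
    "lie_subalgebra sc br L H" "\<And>i. i \<in> {1..k} \<Longrightarrow> skew_bilinear_form sc L (\<theta> i)"
    "(\<Inter>i\<in>{1..k}. form_kernel L (\<theta> i)) = {0}"
    "\<And>i. i \<in> {1..k} \<Longrightarrow> two_cocycle br L (\<theta> i)"
    "\<And>i u v. i \<in> {1..k} \<Longrightarrow> u \<in> H \<Longrightarrow> v \<in> H \<Longrightarrow> \<theta> i u v = 0"
  using assms unfolding k_symplectic_structure_def by auto

lemma vector_space_dim_inj_image:
  fixes \<phi> :: "'b::euclidean_space \<Rightarrow> 'a::ab_group_add"
  assumes vs: "vector_space sc" and lin: "Vector_Spaces.linear scaleR sc \<phi>" and inj: "inj \<phi>"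
  shows "vector_space.dim sc (\<phi> ` S) = dim S"
proof -
  interpret finite_dimensional_vector_space_pair_1 "scaleR :: real \<Rightarrow> 'b \<Rightarrow> 'b" Basis sc
    by (rule finite_dimensional_vector_space_pair_1.intro[OF finite_dimensional_vector_space_euclidean vs])
  show ?thesis
    using dim_image_eq[OF lin inj_on_subset[OF inj subset_UNIV]] by (simp add: dim_raw_def)
qed

lemma linear_add_scale:
  assumes "Vector_Spaces.linear scaleR sc \<phi>"
  shows "\<phi> (a + b) = \<phi> a + \<phi> b" "\<phi> (r *\<^sub>R a) = sc r (\<phi> a)" "\<phi> 0 = 0"
proof -
  show add: "\<phi> (a + b) = \<phi> a + \<phi> b" for a b
    using assms by (simp add: Vector_Spaces.linear_iff)
  show "\<phi> (r *\<^sub>R a) = sc r (\<phi> a)"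
    using assms by (simp add: Vector_Spaces.linear_iff)
  show "\<phi> 0 = 0"
    using add[of 0 0] by simp
qed

lemma lie_subalgebra_vimage:
  assumes lin: "Vector_Spaces.linear scaleR sc \<phi>" and hom: "\<And>a b. br (\<phi> a) (\<phi> b) = \<phi> (br' a b)"
    and H: "lie_subalgebra sc br L H"
  shows "lie_subalgebra scaleR br' UNIV (\<phi> -` H)"
proof -
  have "0 \<in> H" "\<And>u v. u \<in> H \<Longrightarrow> v \<in> H \<Longrightarrow> u + v \<in> H" "\<And>r u. u \<in> H \<Longrightarrow> sc r u \<in> H"
    and "\<And>u v. u \<in> H \<Longrightarrow> v \<in> H \<Longrightarrow> br u v \<in> H"
    using H unfolding lie_subalgebra_def real_subspace_of_def by auto
  then have "0 \<in> \<phi> -` H" "\<And>a b. a \<in> \<phi> -` H \<Longrightarrow> b \<in> \<phi> -` H \<Longrightarrow> a + b \<in> \<phi> -` H"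
    "\<And>r a. a \<in> \<phi> -` H \<Longrightarrow> r *\<^sub>R a \<in> \<phi> -` H"
    "\<And>a b. a \<in> \<phi> -` H \<Longrightarrow> b \<in> \<phi> -` H \<Longrightarrow> br' a b \<in> \<phi> -` H"
    by (simp_all add: linear_add_scale[OF lin] hom[symmetric])
  then show ?thesis
    unfolding lie_subalgebra_def real_subspace_of_def by blast
qed

lemma skew_bilinear_form_pullback:
  assumes lin: "Vector_Spaces.linear scaleR sc \<phi>" and range: "range \<phi> \<subseteq> L"
    and \<theta>: "skew_bilinear_form sc L \<theta>"
  shows "skew_bilinear_form scaleR UNIV (\<lambda>a b. \<theta> (\<phi> a) (\<phi> b))"
proof -
  have "\<theta> (\<phi> (a + a')) (\<phi> b) = \<theta> (\<phi> a) (\<phi> b) + \<theta> (\<phi> a') (\<phi> b)"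
    and "\<theta> (\<phi> (r *\<^sub>R a)) (\<phi> b) = r * \<theta> (\<phi> a) (\<phi> b)"
    and "\<theta> (\<phi> a) (\<phi> b) = - \<theta> (\<phi> b) (\<phi> a)" for a a' b r
    using \<theta> range unfolding skew_bilinear_form_def linear_add_scale[OF lin] by (meson rangeI subsetD)+
  then show ?thesis
    unfolding skew_bilinear_form_def by blast
qed

lemma two_cocycle_pullback:
  assumes hom: "\<And>a b. br (\<phi> a) (\<phi> b) = \<phi> (br' a b)" and range: "range \<phi> \<subseteq> L"
    and \<theta>: "two_cocycle br L \<theta>"
  shows "two_cocycle br' UNIV (\<lambda>a b. \<theta> (\<phi> a) (\<phi> b))"
  using \<theta> range unfolding two_cocycle_def by (simp add: hom[symmetric] subset_eq)

lemma form_kernels_pullback: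
  assumes "inj \<phi>" and "\<phi> 0 = 0" and "range \<phi> = L" and "(\<Inter>i\<in>I. form_kernel L (\<theta> i)) = {0}"
  shows "(\<Inter>i\<in>I. form_kernel UNIV (\<lambda>a b. \<theta> i (\<phi> a) (\<phi> b))) = {0}"
proof (rule set_eqI)
  fix a
  have "a \<in> (\<Inter>i\<in>I. form_kernel UNIV (\<lambda>a b. \<theta> i (\<phi> a) (\<phi> b))) \<longleftrightarrow>
      \<phi> a \<in> (\<Inter>i\<in>I. form_kernel L (\<theta> i))"
    using assms(3) by (auto simp: form_kernel_def)
  also have "\<dots> \<longleftrightarrow> a = 0"
    using assms by (metis injD singleton_iff)
  finally show "a \<in> (\<Inter>i\<in>I. form_kernel UNIV (\<lambda>a b. \<theta> i (\<phi> a) (\<phi> b))) \<longleftrightarrow> a \<in> {0}"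
    by simp
qed

lemma k_symplectic_structure_pullback:
  fixes \<phi> :: "'b::euclidean_space \<Rightarrow> 'a::ab_group_add"
  assumes vs: "vector_space sc" and lin: "Vector_Spaces.linear scaleR sc \<phi>" and inj: "inj \<phi>"
    and range: "range \<phi> = L" and hom: "\<And>a b. br (\<phi> a) (\<phi> b) = \<phi> (br' a b)"
    and ks: "k_symplectic_structure sc br L k H \<theta>"
  shows "k_symplectic_structure scaleR br' UNIV k (\<phi> -` H) (\<lambda>i a b. \<theta> i (\<phi> a) (\<phi> b))"
proof -
  obtain n where k: "1 \<le> k" and n: "1 \<le> n" "vector_space.dim sc L = n * (k + 1)"
      "vector_space.dim sc H = n * k"
    and H: "lie_subalgebra sc br L H" and forms: "\<And>i. i \<in> {1..k} \<Longrightarrow> skew_bilinear_form sc L (\<theta> i)"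
    and kernel: "(\<Inter>i\<in>{1..k}. form_kernel L (\<theta> i)) = {0}"
    and cocycles: "\<And>i. i \<in> {1..k} \<Longrightarrow> two_cocycle br L (\<theta> i)"
    and isotropic: "\<And>i u v. i \<in> {1..k} \<Longrightarrow> u \<in> H \<Longrightarrow> v \<in> H \<Longrightarrow> \<theta> i u v = 0"
    by (rule k_symplectic_structureE[OF ks]) (rule that)
  have HL: "H \<subseteq> L"
    using H by (simp add: lie_subalgebra_def)
  have "lie_subalgebra scaleR br' UNIV (\<phi> -` H)"
    by (rule lie_subalgebra_vimage[where br' = br', OF lin hom H])
  moreover have "dim (UNIV :: 'b set) = n * (k + 1)" "dim (\<phi> -` H) = n * k"
    using vector_space_dim_inj_image[OF vs lin inj, of UNIV] vector_space_dim_inj_image[OF vs lin inj, of "\<phi> -` H"]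
      n range HL by (simp_all add: image_vimage_eq Int_absorb2)
  moreover have "(\<Inter>i\<in>{1..k}. form_kernel UNIV (\<lambda>a b. \<theta> i (\<phi> a) (\<phi> b))) = {0}"
    by (rule form_kernels_pullback[OF inj linear_add_scale(3)[OF lin] range kernel])
  moreover have "skew_bilinear_form scaleR UNIV (\<lambda>a b. \<theta> i (\<phi> a) (\<phi> b))"
    and "two_cocycle br' UNIV (\<lambda>a b. \<theta> i (\<phi> a) (\<phi> b))" if "i \<in> {1..k}" for i
    using skew_bilinear_form_pullback[OF lin _ forms[OF that]]
      two_cocycle_pullback[where br' = br', OF hom _ cocycles[OF that]] range by simp_all
  ultimately show ?thesis
    using k n isotropic unfolding k_symplectic_structure_def dim_raw_def by auto
qed

section \<open>The cotangent algebra of (\<real>^3, \<times>)\<close>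

type_synonym tso3 = "(real^3) \<times> (real^3)"

definition Tso3_bracket :: "tso3 \<Rightarrow> tso3 \<Rightarrow> tso3" where
  "Tso3_bracket p q = (cross3 (fst p) (fst q), cross3 (fst p) (snd q) - cross3 (fst q) (snd p))"

lemma vec3_eq_sum_axis: "(x::real^3) = x$1 *\<^sub>R axis 1 1 + x$2 *\<^sub>R axis 2 1 + x$3 *\<^sub>R axis 3 1"
  by (simp add: vec_eq_iff forall_3 axis_def)

lemma dual_eq_sum_axis:
  fixes f :: "real^3"
  shows "((0::real^3), f) = f$1 *\<^sub>R (0, axis 1 1) + f$2 *\<^sub>R (0, axis 2 1) + f$3 *\<^sub>R (0, axis 3 1)"
  using vec3_eq_sum_axis[of f] by (simp add: prod_eq_iff)

lemma dot_cross_rotate: "a \<bullet> cross3 b c = b \<bullet> cross3 c a"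
  by (simp add: cross3_simps)

lemma bilinear_vec3_eq_sum_axis:
  fixes g :: "real^3 \<Rightarrow> real^3 \<Rightarrow> real"
  assumes "\<And>x x' f. g (x + x') f = g x f + g x' f" "\<And>r x f. g (r *\<^sub>R x) f = r * g x f"
    and "\<And>x f f'. g x (f + f') = g x f + g x f'" "\<And>r x f. g x (r *\<^sub>R f) = r * g x f"
  shows "g x f = (\<Sum>i\<in>UNIV. \<Sum>j\<in>UNIV. x$i * f$j * g (axis i 1) (axis j 1))"
proof -
  have "g x f = g (x$1 *\<^sub>R axis 1 1 + x$2 *\<^sub>R axis 2 1 + x$3 *\<^sub>R axis 3 1)
                  (f$1 *\<^sub>R axis 1 1 + f$2 *\<^sub>R axis 2 1 + f$3 *\<^sub>R axis 3 1)"
    using vec3_eq_sum_axis[of x] vec3_eq_sum_axis[of f] by simp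
  also have "\<dots> = (\<Sum>i\<in>UNIV. \<Sum>j\<in>UNIV. x$i * f$j * g (axis i 1) (axis j 1))"
    by (simp add: assms sum_3 algebra_simps)
  finally show ?thesis .
qed

lemma bilinear_cross_relation_eq_triple_product:
  fixes g :: "real^3 \<Rightarrow> real^3 \<Rightarrow> real"
  assumes "\<And>x x' f. g (x + x') f = g x f + g x' f"
    and scale_left: "\<And>r x f. g (r *\<^sub>R x) f = r * g x f"
    and "\<And>x f f'. g x (f + f') = g x f + g x f'"
    and scale_right: "\<And>r x f. g x (r *\<^sub>R f) = r * g x f"
    and rel: "\<And>x x' f. g (cross3 x x') f - g x (cross3 x' f) + g x' (cross3 x f) = 0"
  shows "\<exists>b. \<forall>x f. g x f = b \<bullet> cross3 x f"
proof -
  have neg: "g (- x) f = - g x f" "g x (- f) = - g x f" "g 0 f = 0" "g x 0 = 0" for x f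
    using scale_left[of "-1" x f] scale_right[of x "-1" f] scale_left[of 0 0 f] scale_right[of x 0 0]
    by simp_all
  define m where "m i j = g (axis i 1) (axis j 1)" for i j
  have "m 3 1 + m 1 3 = 0"
    using rel[of "axis 1 1" "axis 2 1" "axis 1 1"] by (simp add: cross_basis neg m_def)
  moreover have "m 3 2 + m 2 3 = 0"
    using rel[of "axis 1 1" "axis 2 1" "axis 2 1"] by (simp add: cross_basis neg m_def)
  moreover have "m 3 3 - m 1 1 - m 2 2 = 0"
    using rel[of "axis 1 1" "axis 2 1" "axis 3 1"] by (simp add: cross_basis neg m_def)
  moreover have "m 1 1 - m 2 2 - m 3 3 = 0"
    using rel[of "axis 2 1" "axis 3 1" "axis 1 1"] by (simp add: cross_basis neg m_def)
  moreover have "m 1 2 + m 2 1 = 0"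
    using rel[of "axis 2 1" "axis 3 1" "axis 2 1"] by (simp add: cross_basis neg m_def)
  moreover have "m 2 2 - m 3 3 - m 1 1 = 0"
    using rel[of "axis 3 1" "axis 1 1" "axis 2 1"] by (simp add: cross_basis neg m_def)
  ultimately have m: "m 1 1 = 0" "m 2 2 = 0" "m 3 3 = 0"
    "m 2 1 = - m 1 2" "m 1 3 = - m 3 1" "m 3 2 = - m 2 3"
    by linarith+
  have "g x f = vector [m 2 3, m 3 1, m 1 2] \<bullet> cross3 x f" for x f
  proof -
    have "g x f = (\<Sum>i\<in>UNIV. \<Sum>j\<in>UNIV. x$i * f$j * m i j)"
      unfolding m_def by (rule bilinear_vec3_eq_sum_axis) (use assms in auto)
    then show ?thesis
      using m by (simp add: cross3_simps)
  qed
  then show ?thesis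
    by blast
qed

locale Tso3_cocycle =
  fixes \<omega> :: "tso3 \<Rightarrow> tso3 \<Rightarrow> real"
  assumes add_left: "\<omega> (p + p') q = \<omega> p q + \<omega> p' q"
    and scale_left: "\<omega> (r *\<^sub>R p) q = r * \<omega> p q"
    and skew: "\<omega> p q = - \<omega> q p"
    and cocycle: "\<omega> (Tso3_bracket p q) s + \<omega> (Tso3_bracket q s) p + \<omega> (Tso3_bracket s p) q = 0"
begin

lemma add_right: "\<omega> p (q + q') = \<omega> p q + \<omega> p q'"
  using add_left skew by (metis minus_add_distrib)

lemma scale_right: "\<omega> p (r *\<^sub>R q) = r * \<omega> p q"
  using scale_left skew by (metis mult_minus_right)

lemma zero_left [simp]: "\<omega> 0 q = 0" "\<omega> (0, 0) q = 0"
  using scale_left[of 0] by (simp_all add: zero_prod_def[symmetric])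

lemma neg_left: "\<omega> (- p) q = - \<omega> p q"
  using scale_left[of "-1"] by simp

lemma dual_add_left: "\<omega> (0, a + b) q = \<omega> (0, a) q + \<omega> (0, b) q"
  using add_left[of "(0, a)" "(0, b)"] by simp

lemma dual_scale_left: "\<omega> (0, r *\<^sub>R a) q = r * \<omega> (0, a) q"
  using scale_left[of r "(0, a)"] by simp

lemma dual_neg_left: "\<omega> (0, - a) q = - \<omega> (0, a) q"
  using neg_left[of "(0, a)"] by simp

lemma dual_neg_right: "\<omega> p (0, - a) = - \<omega> p (0, a)"
  using scale_right[of p "-1" "(0, a)"] by simp

lemma dual_cross_symmetric: "\<omega> (0, cross3 x y) (0, f) = \<omega> (0, cross3 x f) (0, y)"
proof -
  have "\<omega> (Tso3_bracket (x,0) (0,y)) (0,f) + \<omega> (Tso3_bracket (0,y) (0,f)) (x,0)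
          + \<omega> (Tso3_bracket (0,f) (x,0)) (0,y) = 0"
    by (rule cocycle)
  moreover have "Tso3_bracket (0,f) (x,0) = - (0, cross3 x f)"
    by (simp add: Tso3_bracket_def)
  ultimately show ?thesis
    by (simp add: Tso3_bracket_def dual_neg_left zero_prod_def[symmetric])
qed

lemma dual_dual_zero: "\<omega> (0, g) (0, f) = 0"
proof -
  have "(f \<bullet> f) *\<^sub>R g = cross3 f (cross3 g f) + (f \<bullet> g) *\<^sub>R f"
    by (simp add: cross3_simps forall_3)
  then have "(f \<bullet> f) * \<omega> (0, g) (0, f)
               = \<omega> (0, cross3 f (cross3 g f)) (0, f) + (f \<bullet> g) * \<omega> (0, f) (0, f)"
    by (metis dual_add_left dual_scale_left)
  also have "\<dots> = 0"
    using dual_cross_symmetric[of f "cross3 g f" f] skew[of "(0, f)" "(0, f)"] by simp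
  finally show ?thesis
    using scale_right[of "(0, g)" 0 "(0, 0)"] by (cases "f = 0") auto
qed

lemma mixed_cross_relation:
  "\<omega> (cross3 x x', 0) (0, f) - \<omega> (x, 0) (0, cross3 x' f) + \<omega> (x', 0) (0, cross3 x f) = 0"
proof -
  have "\<omega> (Tso3_bracket (x,0) (x',0)) (0,f) + \<omega> (Tso3_bracket (x',0) (0,f)) (x,0)
          + \<omega> (Tso3_bracket (0,f) (x,0)) (x',0) = 0"
    by (rule cocycle)
  moreover have "Tso3_bracket (0,f) (x,0) = (0, - cross3 x f)"
    by (simp add: Tso3_bracket_def)
  ultimately show ?thesis
    using skew[of "(0, _)" "(x, 0)"] skew[of "(0, _)" "(x', 0)"]
    by (simp add: Tso3_bracket_def dual_neg_right)
qed

lemma mixed_eq_triple_product: "\<exists>b. \<forall>x f. \<omega> (x, 0) (0, f) = b \<bullet> cross3 x f"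
proof (rule bilinear_cross_relation_eq_triple_product)
  show "\<omega> (x + x', 0) (0, f) = \<omega> (x, 0) (0, f) + \<omega> (x', 0) (0, f)" for x x' f
    using add_left[of "(x, 0)" "(x', 0)"] by simp
  show "\<omega> (r *\<^sub>R x, 0) (0, f) = r * \<omega> (x, 0) (0, f)" for r x f
    using scale_left[of r "(x, 0)"] by simp
  show "\<omega> (x, 0) (0, f + f') = \<omega> (x, 0) (0, f) + \<omega> (x, 0) (0, f')" for x f f'
    using add_right[of "(x, 0)" "(0, f)" "(0, f')"] by simp
  show "\<omega> (x, 0) (0, r *\<^sub>R f) = r * \<omega> (x, 0) (0, f)" for r x f
    using scale_right[of "(x, 0)" r "(0, f)"] by simp
qed (rule mixed_cross_relation)

lemma triple_product_form: "\<exists>b. \<forall>p f. \<omega> p (0, f) = b \<bullet> cross3 (fst p) f"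
proof -
  obtain b where b: "\<And>x f. \<omega> (x, 0) (0, f) = b \<bullet> cross3 x f"
    using mixed_eq_triple_product by blast
  have "\<omega> p (0, f) = b \<bullet> cross3 (fst p) f" for p f
    using add_left[of "(fst p, 0)" "(0, snd p)" "(0, f)"] b[of "fst p" f] dual_dual_zero[of "snd p" f]
    by simp
  then show ?thesis
    by blast
qed

end

section \<open>Subalgebras of dimension at least four\<close>

lemma cross_closed_subspace_cases:
  fixes P :: "(real^3) set"
  assumes sub: "subspace P" and cl: "\<And>x y. x \<in> P \<Longrightarrow> y \<in> P \<Longrightarrow> cross3 x y \<in> P"
  shows "P = UNIV \<or> (\<exists>a. P \<subseteq> span {a})"
proof (cases "\<exists>x\<in>P. \<exists>y\<in>P. cross3 x y \<noteq> 0")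
  case True
  then obtain x y where xy: "x \<in> P" "y \<in> P" and n: "cross3 x y \<noteq> 0"
    by blast
  define z where "z = cross3 (cross3 x y) x"
  have orth: "x \<bullet> cross3 x y = 0" "x \<bullet> z = 0" "cross3 x y \<bullet> z = 0"
    by (simp_all add: z_def dot_cross_self)
  have "x \<noteq> 0"
    using n by auto
  moreover have "z \<noteq> 0"
  proof
    assume "z = 0"
    then have "(norm (cross3 x y) * norm x)\<^sup>2 = 0"
      using norm_cross_dot[of "cross3 x y" x] orth by (simp add: z_def inner_commute)
    with n \<open>x \<noteq> 0\<close> show False
      by simp
  qed
  ultimately have indep: "independent {x, cross3 x y, z}"
    using n orth by (intro pairwise_orthogonal_independent)
      (auto simp: pairwise_def orthogonal_def inner_commute)
  have "x \<noteq> cross3 x y" "x \<noteq> z" "cross3 x y \<noteq> z"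
    using n orth \<open>x \<noteq> 0\<close> by (metis inner_eq_zero_iff)+
  then have card: "card {x, cross3 x y, z} = 3"
    by simp
  have "{x, cross3 x y, z} \<subseteq> P"
    using xy cl by (simp add: z_def)
  then have "dim (UNIV :: (real^3) set) \<le> dim P"
    using independent_card_le_dim[OF _ indep] card by simp
  then show ?thesis
    using subspace_dim_equal[OF sub subspace_UNIV] by auto
next
  case False
  show ?thesis
  proof (cases "P \<subseteq> {0}")
    case True
    then show ?thesis
      using span_zero by blast
  next
    case False
    then obtain a where a: "a \<in> P" "a \<noteq> 0"
      by blast
    have "p \<in> span {a}" if "p \<in> P" for p
    proof -
      have "collinear {0, a, p}"
        using \<open>\<not> (\<exists>x\<in>P. \<exists>y\<in>P. cross3 x y \<noteq> 0)\<close> a that cross_eq_0 by blast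
      then obtain c where "p = c *\<^sub>R a"
        using a collinear_lemma[of a p] by auto
      then show ?thesis
        by (simp add: span_base span_scale)
    qed
    then show ?thesis
      by blast
  qed
qed

lemma dim_dual_part: "dim {p :: tso3. fst p = 0} = 3"
proof -
  have "linear (\<lambda>f :: real^3. (0 :: real^3, f))"
    by (simp add: linear_iff)
  moreover have "{p :: tso3. fst p = 0} = (\<lambda>f. (0, f)) ` UNIV"
    by (auto simp: image_iff prod_eq_iff)
  ultimately show ?thesis
    using dim_image_eq[of "\<lambda>f :: real^3. (0 :: real^3, f)" UNIV] by (simp add: inj_on_def)
qed

lemma dual_part_subset_if_fst_surj:
  fixes H :: "tso3 set"
  assumes sub: "subspace H" and cl: "\<And>p q. p \<in> H \<Longrightarrow> q \<in> H \<Longrightarrow> Tso3_bracket p q \<in> H"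
    and f: "(0, f) \<in> H" "f \<noteq> 0" and surj: "fst ` H = UNIV"
  shows "(0, v) \<in> H"
proof -
  have "cross3 f v \<in> fst ` H"
    using surj by simp
  then obtain y where "(cross3 f v, y) \<in> H"
    by force
  then have "Tso3_bracket (cross3 f v, y) (0, f) \<in> H"
    using cl f by blast
  moreover have "Tso3_bracket (cross3 f v, y) (0, f) = (0, (f \<bullet> f) *\<^sub>R v - (f \<bullet> v) *\<^sub>R f)"
    by (simp add: Tso3_bracket_def cross3_simps forall_3)
  ultimately have "(0, (f \<bullet> f) *\<^sub>R v - (f \<bullet> v) *\<^sub>R f) + (f \<bullet> v) *\<^sub>R (0, f) \<in> H"
    using sub f by (metis subspace_add subspace_scale)
  then have "(0, (f \<bullet> f) *\<^sub>R v) \<in> H"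
    by simp
  moreover have "(1 / (f \<bullet> f)) *\<^sub>R (0, (f \<bullet> f) *\<^sub>R v) = (0, v)"
    using f by simp
  ultimately show ?thesis
    using sub by (metis subspace_scale)
qed

lemma dim_sum_dual_part:
  fixes H :: "tso3 set"
  assumes "subspace H"
  shows "dim {p + q |p q. p \<in> H \<and> q \<in> {p. fst p = 0}} + dim (H \<inter> {p. fst p = 0}) = dim H + 3"
proof -
  have "subspace {p :: tso3. fst p = 0}"
    by (auto simp: subspace_def)
  from dim_sums_Int[OF assms this] show ?thesis
    by (simp only: dim_dual_part)
qed

lemma dual_part_meets_large_subspace:
  fixes H :: "tso3 set"
  assumes sub: "subspace H" and dim: "4 \<le> dim H"
  obtains f where "(0, f) \<in> H" "f \<noteq> 0"
proof -
  have "dim {p + q |p q. p \<in> H \<and> q \<in> {p. fst p = 0}} \<le> 6"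
    using dim_subset_UNIV[of "{p + q |p q. p \<in> H \<and> q \<in> {p :: tso3. fst p = 0}}"] by simp
  then have "\<not> H \<inter> {p. fst p = 0} \<subseteq> {0}"
    using dim_sum_dual_part[OF sub] dim dim_eq_0[of "H \<inter> {p. fst p = 0}"] by linarith
  then obtain p where p: "p \<in> H" "fst p = 0" "p \<noteq> 0"
    by blast
  then have "p = (0, snd p)"
    by (simp add: prod_eq_iff)
  with p have "(0, snd p) \<in> H" "snd p \<noteq> 0"
    by (metis, metis zero_prod_def)
  then show ?thesis
    by (rule that)
qed

lemma dual_part_subset_if_fst_in_line:
  fixes H :: "tso3 set"
  assumes sub: "subspace H" and line: "fst ` H \<subseteq> span {a}" and dim: "4 \<le> dim H"
  shows "{p. fst p = 0} \<subseteq> H"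
proof -
  let ?A = "{p :: tso3. fst p = 0}" and ?HA = "{p + q |p q. p \<in> H \<and> q \<in> {p :: tso3. fst p = 0}}"
    and ?W = "{(a, 0), (0, axis 1 1), (0, axis 2 1), (0, axis 3 1)} :: tso3 set"
  have "?HA \<subseteq> span ?W"
  proof
    fix z assume "z \<in> ?HA"
    then obtain h q where z: "z = h + q" "h \<in> H" "fst q = 0"
      by blast
    obtain c where "fst h = c *\<^sub>R a"
      using line z(2) by (auto simp: span_singleton)
    then have "z = c *\<^sub>R (a, 0) + (0, snd z)"
      using z by (simp add: prod_eq_iff)
    also have "\<dots> \<in> span ?W"
      by (subst dual_eq_sum_axis) (intro span_add span_scale span_base; simp)
    finally show "z \<in> span ?W" .
  qed
  then have "dim ?HA \<le> card ?W"
    by (rule dim_le_card) simp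
  also have "card ?W \<le> 4"
    using card_length[of "[(a, 0), (0, axis 1 1), (0, axis 2 1), (0, axis 3 1)] :: tso3 list"] by simp
  finally have "dim ?A \<le> dim (H \<inter> ?A)"
    using dim_sum_dual_part[OF sub] dim dim_dual_part by linarith
  moreover have "subspace ?A"
    by (auto simp: subspace_def)
  ultimately have "H \<inter> ?A = ?A"
    using subspace_dim_equal[OF subspace_inter[OF sub]] by blast
  then show ?thesis
    by blast
qed

lemma dual_part_subset_subalgebra:
  fixes H :: "tso3 set"
  assumes sub: "subspace H" and cl: "\<And>p q. p \<in> H \<Longrightarrow> q \<in> H \<Longrightarrow> Tso3_bracket p q \<in> H"
    and dim: "4 \<le> dim H"
  shows "{p. fst p = 0} \<subseteq> H"
proof -
  have "subspace (fst ` H)"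
    by (rule linear_subspace_image[OF linear_fst sub])
  moreover have "cross3 x y \<in> fst ` H" if x: "x \<in> fst ` H" and y: "y \<in> fst ` H" for x y
  proof -
    obtain p q where "p \<in> H" "q \<in> H" "x = fst p" "y = fst q"
      using x y by blast
    then show ?thesis
      using cl[of p q] by (force simp: Tso3_bracket_def)
  qed
  ultimately consider "fst ` H = UNIV" | a where "fst ` H \<subseteq> span {a}"
    using cross_closed_subspace_cases by blast
  then show ?thesis
  proof cases
    case 1
    obtain f where "(0, f) \<in> H" "f \<noteq> 0"
      using dual_part_meets_large_subspace[OF sub dim] .
    then show ?thesis
      using dual_part_subset_if_fst_surj[OF sub cl _ _ 1] by (auto simp: prod_eq_iff)
  next
    case 2
    then show ?thesis
      using dual_part_subset_if_fst_in_line[OF sub _ dim] by blast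
  qed
qed

lemma Tso3_cocycleI:
  assumes "skew_bilinear_form scaleR UNIV \<omega>" and "two_cocycle Tso3_bracket UNIV \<omega>"
  shows "Tso3_cocycle \<omega>"
  using assms unfolding skew_bilinear_form_def two_cocycle_def by unfold_locales blast+

lemma subspace_iff_real_subspace_of: "subspace S \<longleftrightarrow> real_subspace_of scaleR S"
  by (auto simp: subspace_def real_subspace_of_def)

lemma (in Tso3_cocycle) dual_in_form_kernel:
  assumes b: "\<And>p f. \<omega> p (0, f) = b \<bullet> cross3 (fst p) f" and w: "cross3 w b = 0"
  shows "(0, w) \<in> form_kernel UNIV \<omega>"
proof -
  have "\<omega> (0, w) q = 0" for q
    using skew[of "(0, w)" q] b[of q w] w dot_cross_rotate[of b "fst q" w] by simp
  then show ?thesis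
    by (simp add: form_kernel_def)
qed

lemma (in Tso3_cocycle) fst_parallel_if_orthogonal_to_dual_part:
  assumes b: "\<And>p f. \<omega> p (0, f) = b \<bullet> cross3 (fst p) f" and orth: "\<And>f. \<omega> p (0, f) = 0"
  shows "cross3 (fst p) b = 0"
proof -
  let ?g = "cross3 b (fst p)"
  have "?g \<bullet> ?g = 0"
    using orth[of ?g] b[of p ?g] dot_cross_rotate[of b "fst p" ?g] dot_cross_rotate[of "fst p" ?g b]
    by simp
  then show ?thesis
    by (metis cross_skew inner_eq_zero_iff neg_equal_0_iff_equal)
qed

lemma no_k_symplectic_structure_Tso3: "\<not> k_symplectic_structure scaleR Tso3_bracket UNIV k H \<omega>"
proof
  assume "k_symplectic_structure scaleR Tso3_bracket UNIV k H \<omega>"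
  then obtain n where k: "1 \<le> k" and n: "dim (UNIV :: tso3 set) = n * (k + 1)" "dim H = n * k"
    and H: "subspace H" "\<And>p q. p \<in> H \<Longrightarrow> q \<in> H \<Longrightarrow> Tso3_bracket p q \<in> H"
    and forms: "\<And>i. i \<in> {1..k} \<Longrightarrow> Tso3_cocycle (\<omega> i)"
    and kernel: "(\<Inter>i\<in>{1..k}. form_kernel UNIV (\<omega> i)) = {0}"
    and isotropic: "\<And>i p q. i \<in> {1..k} \<Longrightarrow> p \<in> H \<Longrightarrow> q \<in> H \<Longrightarrow> \<omega> i p q = 0"
    by (elim k_symplectic_structureE)
      (auto simp: lie_subalgebra_def subspace_iff_real_subspace_of dim_raw_def Tso3_cocycleI)
  have "\<forall>i\<in>{1..k}. \<exists>b. \<forall>p f. \<omega> i p (0, f) = b \<bullet> cross3 (fst p) f"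
    using Tso3_cocycle.triple_product_form forms by blast
  then obtain b where b: "\<And>i p f. i \<in> {1..k} \<Longrightarrow> \<omega> i p (0, f) = b i \<bullet> cross3 (fst p) f"
    by metis
  have radical: "w = 0" if w: "\<And>i. i \<in> {1..k} \<Longrightarrow> cross3 w (b i) = 0" for w
  proof -
    have "(0, w) \<in> (\<Inter>i\<in>{1..k}. form_kernel UNIV (\<omega> i))"
      using Tso3_cocycle.dual_in_form_kernel[OF forms b w] by blast
    then have "(0, w) = (0 :: tso3)"
      using kernel by blast
    then show ?thesis
      by (simp add: zero_prod_def)
  qed
  show False
  proof (cases "k = 1")
    case True
    have "(if b 1 = 0 then axis 1 1 else b 1) = 0"
      by (rule radical) (use True in auto)
    then show False
      by (simp add: axis_eq_0_iff split: if_splits)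
  next
    case False
    have six: "n + n * k = 6"
      using n by (simp add: algebra_simps)
    have "n * 3 \<le> n * (k + 1)"
      by (rule mult_le_mono2) (use False k in simp)
    also have "\<dots> = 6"
      using n by simp
    finally have "4 \<le> dim H"
      using six n(2) by linarith
    then have dual: "{p. fst p = 0} \<subseteq> H"
      using dual_part_subset_subalgebra H by blast
    have "\<not> H \<subseteq> {p. fst p = 0}"
      using dim_subset[of H "{p. fst p = 0}"] \<open>4 \<le> dim H\<close> dim_dual_part by auto
    then obtain p where p: "p \<in> H" "fst p \<noteq> 0"
      by blast
    have "cross3 (fst p) (b i) = 0" if i: "i \<in> {1..k}" for i
    proof (rule Tso3_cocycle.fst_parallel_if_orthogonal_to_dual_part[OF forms[OF i] b[OF i]])
      show "\<omega> i p (0, f) = 0" for f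
        using dual by (intro isotropic[OF i p(1)]) auto
    qed
    with p(2) show False
      using radical by blast
  qed
qed

section \<open>T*su(2) is isomorphic to the model\<close>

text \<open>The factor 1/2 makes the matrix commutator correspond exactly to the cross product.\<close>

definition su2_of :: "real^3 \<Rightarrow> complex^2^2" where
  "su2_of x = (\<chi> r c. if r = 1 then (if c = 1 then Complex 0 (x$1 / 2) else Complex (x$2 / 2) (x$3 / 2))
                      else (if c = 1 then Complex (- x$2 / 2) (x$3 / 2) else Complex 0 (- x$1 / 2)))"

definition su2_coords :: "complex^2^2 \<Rightarrow> real^3" where
  "su2_coords A = vector [2 * Im (A$1$1), 2 * Re (A$1$2), 2 * Im (A$1$2)]"

lemma su2_of_nth:
  "su2_of x $ 1 $ 1 = Complex 0 (x$1 / 2)" "su2_of x $ 1 $ 2 = Complex (x$2 / 2) (x$3 / 2)"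
  "su2_of x $ 2 $ 1 = Complex (- x$2 / 2) (x$3 / 2)" "su2_of x $ 2 $ 2 = Complex 0 (- x$1 / 2)"
  by (simp_all add: su2_of_def)

lemma su2_of_in_su2: "su2_of x \<in> su2"
  unfolding su2_def by (auto simp: forall_2 su2_of_nth complex_eq_iff)

lemma su2_coords_su2_of [simp]: "su2_coords (su2_of x) = x"
  by (simp add: su2_coords_def su2_of_nth vec_eq_iff forall_3 vector_def)

lemma su2_of_su2_coords:
  assumes "A \<in> su2"
  shows "su2_of (su2_coords A) = A"
proof -
  have skew: "\<And>i j. A$i$j = - cnj (A$j$i)" and trace: "A$1$1 + A$2$2 = 0"
    using assms unfolding su2_def by blast+
  have "Re (A$1$1) = 0"
    using arg_cong[OF skew[of 1 1], of Re] by simp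
  moreover have "A$2$2 = - A$1$1"
    using trace by (simp add: eq_neg_iff_add_eq_0 add.commute)
  moreover have "A$2$1 = - cnj (A$1$2)"
    using skew[of 2 1] by simp
  ultimately show ?thesis
    by (simp add: vec_eq_iff forall_2 su2_of_nth su2_coords_def vector_def complex_eq_iff)
qed

lemma su2_of_add: "su2_of (x + y) = su2_of x + su2_of y"
  by (simp add: vec_eq_iff forall_2 su2_of_nth complex_eq_iff)

lemma su2_of_scale: "su2_of (r *\<^sub>R x) = r *\<^sub>R su2_of x"
  by (simp add: vec_eq_iff forall_2 su2_of_nth complex_eq_iff)

lemma su2_bracket_su2_of: "su2_bracket (su2_of x) (su2_of y) = su2_of (cross3 x y)"
  by (simp add: su2_bracket_def vec_eq_iff forall_2 su2_of_nth complex_eq_iff matrix_matrix_mult_def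
      sum_2 cross3_simps field_simps)

lemma su2_add: "A \<in> su2 \<Longrightarrow> B \<in> su2 \<Longrightarrow> A + B \<in> su2"
  by (metis su2_of_su2_coords su2_of_add su2_of_in_su2)

lemma su2_scale: "A \<in> su2 \<Longrightarrow> r *\<^sub>R A \<in> su2"
  by (metis su2_of_su2_coords su2_of_scale su2_of_in_su2)

definition su2_dual_of :: "real^3 \<Rightarrow> complex^2^2 \<Rightarrow> real" where
  "su2_dual_of y A = (if A \<in> su2 then y \<bullet> su2_coords A else 0)"

lemma su2_dual_of_su2_of [simp]: "su2_dual_of y (su2_of z) = y \<bullet> z"
  by (simp add: su2_dual_of_def su2_of_in_su2)

lemma su2_dual_of_in_su2_dual: "su2_dual_of y \<in> su2_dual"
  unfolding su2_dual_def su2_dual_of_def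
  by (auto simp: su2_add su2_scale su2_coords_def vector_def inner_vec_def sum_3 algebra_simps)

lemma su2_dual_eq_su2_dual_of:
  assumes "\<alpha> \<in> su2_dual"
  shows "\<alpha> = su2_dual_of (\<chi> i. \<alpha> (su2_of (axis i 1)))"
proof
  fix A
  have add: "\<And>a b. a \<in> su2 \<Longrightarrow> b \<in> su2 \<Longrightarrow> \<alpha> (a + b) = \<alpha> a + \<alpha> b"
    and scale: "\<And>r a. a \<in> su2 \<Longrightarrow> \<alpha> (r *\<^sub>R a) = r * \<alpha> a"
    and outside: "\<And>x. x \<notin> su2 \<Longrightarrow> \<alpha> x = 0"
    using assms unfolding su2_dual_def by blast+
  show "\<alpha> A = su2_dual_of (\<chi> i. \<alpha> (su2_of (axis i 1))) A"
  proof (cases "A \<in> su2")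
    case True
    let ?z = "su2_coords A"
    have "\<alpha> A = \<alpha> (?z$1 *\<^sub>R su2_of (axis 1 1) + ?z$2 *\<^sub>R su2_of (axis 2 1) + ?z$3 *\<^sub>R su2_of (axis 3 1))"
      using su2_of_su2_coords[OF True] vec3_eq_sum_axis[of ?z] by (metis su2_of_add su2_of_scale)
    also have "\<dots> = ?z$1 * \<alpha> (su2_of (axis 1 1)) + ?z$2 * \<alpha> (su2_of (axis 2 1)) + ?z$3 * \<alpha> (su2_of (axis 3 1))"
      by (simp add: add scale su2_add su2_scale su2_of_in_su2)
    finally show ?thesis
      using True by (simp add: su2_dual_of_def inner_vec_def sum_3 algebra_simps)
  qed (simp add: su2_dual_of_def outside)
qed

definition Tsu2_of :: "tso3 \<Rightarrow> tsu2" where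
  "Tsu2_of p = (su2_of (fst p), su2_dual_of (snd p))"

lemma range_Tsu2_of: "range Tsu2_of = Tsu2"
proof
  show "range Tsu2_of \<subseteq> Tsu2"
    by (auto simp: Tsu2_of_def Tsu2_def su2_of_in_su2 su2_dual_of_in_su2_dual)
  show "Tsu2 \<subseteq> range Tsu2_of"
  proof
    fix u assume "u \<in> Tsu2"
    then have "u = Tsu2_of (su2_coords (fst u), \<chi> i. snd u (su2_of (axis i 1)))"
      by (auto simp: Tsu2_def Tsu2_of_def prod_eq_iff su2_of_su2_coords su2_dual_eq_su2_dual_of[symmetric])
    then show "u \<in> range Tsu2_of"
      by blast
  qed
qed

lemma inj_Tsu2_of: "inj Tsu2_of"
proof
  fix p q assume "Tsu2_of p = Tsu2_of q"
  then have "su2_of (fst p) = su2_of (fst q)" and dual: "su2_dual_of (snd p) = su2_dual_of (snd q)"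
    by (simp_all add: Tsu2_of_def)
  then have "fst p = fst q"
    by (metis su2_coords_su2_of)
  moreover have "snd p $ i = snd q $ i" for i
    using fun_cong[OF dual, of "su2_of (axis i 1)"] by (simp add: inner_axis)
  ultimately show "p = q"
    by (simp add: prod_eq_iff vec_eq_iff)
qed

lemma vector_space_Tsu2_scale: "vector_space Tsu2_scale"
  by unfold_locales (auto simp: Tsu2_scale_def prod_eq_iff fun_eq_iff algebra_simps scaleR_add_right scaleR_add_left)

lemma linear_Tsu2_of: "Vector_Spaces.linear scaleR Tsu2_scale Tsu2_of"
  unfolding Vector_Spaces.linear_iff
  using vector_space_Tsu2_scale real_vector.vector_space_axioms
  by (auto simp: Tsu2_of_def Tsu2_scale_def su2_of_add su2_of_scale su2_dual_of_def fun_eq_iff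
      inner_add_left)

lemma Tsu2_bracket_Tsu2_of: "Tsu2_bracket (Tsu2_of p) (Tsu2_of q) = Tsu2_of (Tso3_bracket p q)"
proof -
  have coad: "su2_coad (su2_of x) (su2_dual_of y) A = (if A \<in> su2 then - (y \<bullet> cross3 x (su2_coords A)) else 0)"
    for x y A
    using su2_bracket_su2_of[of x "su2_coords A"]
    by (auto simp: su2_coad_def su2_of_su2_coords)
  show ?thesis
    by (auto simp: Tsu2_bracket_def Tsu2_of_def Tso3_bracket_def su2_bracket_su2_of coad fun_eq_iff
        su2_dual_of_def cross3_simps)
qed

theorem mainTheorem13:
  "\<forall>k::nat. k \<ge> 1 \<longrightarrow>
     \<not> (\<exists>H \<theta>. k_symplectic_structure Tsu2_scale Tsu2_bracket Tsu2 k H \<theta>)"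
proof (intro allI impI notI, elim exE)
  fix k H \<theta>
  assume "k_symplectic_structure Tsu2_scale Tsu2_bracket Tsu2 k H \<theta>"
  then have "k_symplectic_structure scaleR Tso3_bracket UNIV k (Tsu2_of -` H)
               (\<lambda>i a b. \<theta> i (Tsu2_of a) (Tsu2_of b))"
    by (rule k_symplectic_structure_pullback[where br' = Tso3_bracket, OF vector_space_Tsu2_scale linear_Tsu2_of inj_Tsu2_of
          range_Tsu2_of Tsu2_bracket_Tsu2_of])
  then show False
    using no_k_symplectic_structure_Tso3 by blast
qed

end
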